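(* Let $q$ be a prime power and $n,r$ integers with $1\le r\le\lfloor n/2\rfloor$. Let $\mathcal{C}\subseteq\mathrm{GF}(q)^{r\times(n-r)}$ be any nonempty set of matrices and $I(\mathcal{C}) = \{R({\bf I}_r\mid{\bf C}) : {\bf C}\in\mathcal{C}\}\subseteq E_r(q,n)$. Then $I(\mathcal{C})$ has covering radius $r$, i.e. $\max_{U\in E_r(q,n)}\min_{{\bf C}\in\mathcal{C}} d_{\mathrm{I}}(U, R({\bf I}_r\mid{\bf C})) = r$.
   Context: $E_r(q,n)$ is the set of $r$-dimensional subspaces of $\mathrm{GF}(q)^n$; $R({\bf M})$ is the row space of a matrix ${\bf M}$; the injection distance is $d_{\mathrm{I}}(U,V)=\dim(U+V)-\min\{\dim U,\dim V\}$. *)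

theory Defs
  imports Main "HOL.Vector_Spaces" "HOL-Library.Function_Algebras"
begin

text \<open>Vectors of GF(q)^n are represented as functions nat \<Rightarrow> 'a vanishing from index n on;
  'a is a finite field (so q = CARD('a) is a prime power).\<close>

definition scl :: "'a::field \<Rightarrow> (nat \<Rightarrow> 'a) \<Rightarrow> (nat \<Rightarrow> 'a)" where
  "scl c v = (\<lambda>i. c * v i)"

definition Fvec :: "nat \<Rightarrow> (nat \<Rightarrow> 'a::field) set" where
  "Fvec n = {v. \<forall>i\<ge>n. v i = 0}"

definition sdim :: "(nat \<Rightarrow> 'a::field) set \<Rightarrow> nat" where
  "sdim U = vector_space.dim scl U"

definition Grass :: "nat \<Rightarrow> nat \<Rightarrow> (nat \<Rightarrow> 'a::field) set set" where
  "Grass r n = {U. module.subspace scl U \<and> U \<subseteq> Fvec n \<and> sdim U = r}"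

definition ssum :: "(nat \<Rightarrow> 'a::field) set \<Rightarrow> (nat \<Rightarrow> 'a) set \<Rightarrow> (nat \<Rightarrow> 'a) set" where
  "ssum U V = {u + v | u v. u \<in> U \<and> v \<in> V}"

definition injdist :: "(nat \<Rightarrow> 'a::field) set \<Rightarrow> (nat \<Rightarrow> 'a) set \<Rightarrow> nat" where
  "injdist U V = sdim (ssum U V) - min (sdim U) (sdim V)"

definition Mats :: "nat \<Rightarrow> nat \<Rightarrow> (nat \<Rightarrow> nat \<Rightarrow> 'a::field) set" where
  "Mats r m = {C. \<forall>i j. (r \<le> i \<or> m \<le> j) \<longrightarrow> C i j = 0}"

definition IC_row :: "nat \<Rightarrow> nat \<Rightarrow> (nat \<Rightarrow> nat \<Rightarrow> 'a::field) \<Rightarrow> nat \<Rightarrow> (nat \<Rightarrow> 'a)" where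
  "IC_row r n C k = (\<lambda>j. if j < r then (if j = k then 1 else 0)
                         else if j < n then C k (j - r) else 0)"

definition rowspace_IC :: "nat \<Rightarrow> nat \<Rightarrow> (nat \<Rightarrow> nat \<Rightarrow> 'a::field) \<Rightarrow> (nat \<Rightarrow> 'a) set" where
  "rowspace_IC r n C = module.span scl (IC_row r n C ` {..<r})"

end

theory Submission
  imports Defs
begin

text \<open>Both \<open>U\<close> and \<open>R(I_r | C)\<close> have dimension \<open>r\<close>, so \<open>dim(U + R(I_r | C)) \<le> 2r\<close> and the
  injection distance is at most \<open>r\<close>. Conversely, since \<open>2r \<le> n\<close>, the rows of \<open>(I_r | C)\<close>
  followed by the unit vectors \<open>e_r, \<dots>, e_(2r-1)\<close> are in echelon form with unit pivots on the
  diagonal. Hence the single subspace spanned by \<open>e_r, \<dots>, e_(2r-1)\<close> meets every \<open>R(I_r | C)\<close>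
  trivially and is at distance exactly \<open>r\<close> from all of them.\<close>

interpretation vs: vector_space "scl :: 'a::field \<Rightarrow> (nat \<Rightarrow> 'a) \<Rightarrow> _"
  by unfold_locales (auto simp: scl_def fun_eq_iff algebra_simps)

lemma sum_fun_apply: "(\<Sum>x\<in>A. g x) (j::nat) = (\<Sum>x\<in>A. g x j :: 'a::comm_monoid_add)"
  by (induction A rule: infinite_finite_induct) auto

lemma ssum_span: "ssum (vs.span A) (vs.span B) = vs.span (A \<union> B)"
  by (simp add: ssum_def vs.span_Un)

definition unit_vec :: "nat \<Rightarrow> nat \<Rightarrow> 'a::field" where
  "unit_vec j = (\<lambda>i. if i = j then 1 else 0)"

definition unit_span :: "nat set \<Rightarrow> (nat \<Rightarrow> 'a::field) set" where
  "unit_span S = vs.span (unit_vec ` S)"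

lemma echelon_inj_on:
  fixes v :: "nat \<Rightarrow> nat \<Rightarrow> 'a::field"
  assumes pivot: "\<forall>i\<in>I. v i i = 1" and below: "\<forall>i\<in>I. \<forall>j\<in>I. j < i \<longrightarrow> v i j = 0"
  shows "inj_on v I"
proof (rule inj_onI)
  fix i j assume ij: "i \<in> I" "j \<in> I" "v i = v j"
  show "i = j"
  proof (rule linorder_cases[of i j])
    assume "i < j"
    then have "v j i = 0" using below ij by blast
    then show ?thesis using pivot ij by (metis zero_neq_one)
  next
    assume "j < i"
    then have "v i j = 0" using below ij by blast
    then show ?thesis using pivot ij by (metis zero_neq_one)
  qed
qed

lemma echelon_independent:
  fixes v :: "nat \<Rightarrow> nat \<Rightarrow> 'a::field"
  assumes "finite I" and pivot: "\<forall>i\<in>I. v i i = 1"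
    and below: "\<forall>i\<in>I. \<forall>j\<in>I. j < i \<longrightarrow> v i j = 0"
  shows "vs.independent (v ` I)"
proof (rule vs.independent_if_scalars_zero)
  show "finite (v ` I)" using \<open>finite I\<close> by simp
  have inj: "inj_on v I" using pivot below by (rule echelon_inj_on)
  fix f x
  assume "(\<Sum>x\<in>v ` I. scl (f x) x) = 0" and x: "x \<in> v ` I"
  then have combination: "(\<Sum>i\<in>I. f (v i) * v i j) = 0" for j
    by (simp add: sum.reindex[OF inj] sum_fun_apply scl_def fun_eq_iff)
  have "f (v j) = 0" if "j \<in> I" for j
    using that
  proof (induction j rule: less_induct)
    case (less j)
    \<comment> \<open>at coordinate \<open>j\<close>, earlier coefficients vanish by induction and later vectors vanish there\<close>
    have "(\<Sum>i\<in>I. f (v i) * v i j) = (\<Sum>i\<in>I. if i = j then f (v i) else 0)"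
    proof (rule sum.cong)
      fix i assume "i \<in> I"
      then show "f (v i) * v i j = (if i = j then f (v i) else 0)"
        using less pivot below by (cases i j rule: linorder_cases) auto
    qed simp
    then show ?case using combination[of j] less.prems \<open>finite I\<close> by simp
  qed
  then show "f x = 0" using x by blast
qed

lemma sdim_span_echelon:
  fixes v :: "nat \<Rightarrow> nat \<Rightarrow> 'a::field"
  assumes "finite I" "\<forall>i\<in>I. v i i = 1" "\<forall>i\<in>I. \<forall>j\<in>I. j < i \<longrightarrow> v i j = 0"
  shows "sdim (vs.span (v ` I)) = card I"
  using vs.dim_span_eq_card_independent[OF echelon_independent[OF assms]]
    card_image[OF echelon_inj_on[OF assms(2,3)]]
  by (simp add: sdim_def)

lemma sdim_unit_span: "finite S \<Longrightarrow> sdim (unit_span S :: (nat \<Rightarrow> 'a::field) set) = card S"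
  unfolding unit_span_def by (rule sdim_span_echelon) (auto simp: unit_vec_def)

lemma Fvec_subspace: "vs.subspace (Fvec n :: (nat \<Rightarrow> 'a::field) set)"
  by (auto simp: vs.subspace_def Fvec_def scl_def)

lemma unit_span_subset_Fvec:
  "S \<subseteq> {..<n} \<Longrightarrow> unit_span S \<subseteq> (Fvec n :: (nat \<Rightarrow> 'a::field) set)"
  unfolding unit_span_def
  by (rule vs.span_minimal[OF _ Fvec_subspace]) (auto simp: Fvec_def unit_vec_def)

lemma Fvec_eq_unit_span: "Fvec n = (unit_span {..<n} :: (nat \<Rightarrow> 'a::field) set)"
proof
  show "Fvec n \<subseteq> (unit_span {..<n} :: (nat \<Rightarrow> 'a) set)"
  proof
    fix v :: "nat \<Rightarrow> 'a" assume "v \<in> Fvec n"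
    then have "v = (\<Sum>i<n. scl (v i) (unit_vec i))"
      by (auto simp: fun_eq_iff sum_fun_apply scl_def unit_vec_def Fvec_def if_distrib
          cong: if_cong)
    then show "v \<in> unit_span {..<n}"
      unfolding unit_span_def
      by (metis (no_types, lifting) image_eqI lessThan_iff vs.span_base vs.span_scale vs.span_sum)
  qed
  show "(unit_span {..<n} :: (nat \<Rightarrow> 'a) set) \<subseteq> Fvec n" by (rule unit_span_subset_Fvec) simp
qed

lemma finite_basis_of_subspace_Fvec:
  fixes U :: "(nat \<Rightarrow> 'a::field) set"
  assumes "vs.subspace U" "U \<subseteq> Fvec n"
  obtains B where "finite B" "vs.independent B" "vs.span B = U" "card B = sdim U"
proof -
  obtain B where B: "B \<subseteq> U" "vs.independent B" "U \<subseteq> vs.span B" "card B = vs.dim U"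
    by (rule vs.basis_exists)
  have "finite B"
    using vs.independent_span_bound[of "unit_vec ` {..<n}" B] B(1,2) assms(2)
    by (auto simp: Fvec_eq_unit_span unit_span_def)
  moreover have "vs.span B = U" using B(1,3) vs.span_minimal[OF B(1) assms(1)] by blast
  ultimately show thesis using that B by (simp add: sdim_def)
qed

lemma sdim_ssum_le:
  fixes U V :: "(nat \<Rightarrow> 'a::field) set"
  assumes "vs.subspace U" "U \<subseteq> Fvec n" "vs.subspace V" "V \<subseteq> Fvec n"
  shows "sdim (ssum U V) \<le> sdim U + sdim V"
proof -
  obtain A where A: "finite A" "vs.span A = U" "card A = sdim U"
    using finite_basis_of_subspace_Fvec[OF assms(1,2)] by metis
  obtain B where B: "finite B" "vs.span B = V" "card B = sdim V"
    using finite_basis_of_subspace_Fvec[OF assms(3,4)] by metis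
  have "sdim (ssum U V) \<le> card (A \<union> B)"
    unfolding sdim_def A(2)[symmetric] B(2)[symmetric] ssum_span
    by (rule vs.dim_le_card) (auto simp: A(1) B(1))
  also have "\<dots> \<le> sdim U + sdim V" using card_Un_le A(3) B(3) by metis
  finally show ?thesis .
qed

lemma injdist_le_max:
  fixes U V :: "(nat \<Rightarrow> 'a::field) set"
  assumes "vs.subspace U" "U \<subseteq> Fvec n" "vs.subspace V" "V \<subseteq> Fvec n"
  shows "injdist U V \<le> max (sdim U) (sdim V)"
  using sdim_ssum_le[OF assms] by (simp add: injdist_def)

lemma IC_row_echelon:
  "\<forall>i\<in>{..<r}. IC_row r n C i i = 1" "\<forall>i\<in>{..<r}. \<forall>j\<in>{..<r}. j < i \<longrightarrow> IC_row r n C i j = 0"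
  by (auto simp: IC_row_def)

lemma rowspace_IC_subset_Fvec: "r \<le> n \<Longrightarrow> rowspace_IC r n C \<subseteq> Fvec n"
  unfolding rowspace_IC_def
  by (rule vs.span_minimal[OF _ Fvec_subspace]) (auto simp: Fvec_def IC_row_def)

lemma rowspace_IC_subspace: "vs.subspace (rowspace_IC r n C)"
  by (simp add: rowspace_IC_def)

lemma sdim_rowspace_IC: "sdim (rowspace_IC r n C) = r"
  unfolding rowspace_IC_def by (simp add: sdim_span_echelon IC_row_echelon)

lemma rowspace_IC_Grass: "r \<le> n \<Longrightarrow> rowspace_IC r n C \<in> Grass r n"
  by (simp add: Grass_def rowspace_IC_subspace sdim_rowspace_IC rowspace_IC_subset_Fvec)

lemma unit_block_Grass:
  "2 * r \<le> n \<Longrightarrow> unit_span {r..<2*r} \<in> (Grass r n :: (nat \<Rightarrow> 'a::field) set set)"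
  by (auto simp: Grass_def sdim_unit_span intro!: unit_span_subset_Fvec) (simp add: unit_span_def)

lemma sdim_ssum_unit_block_rowspace_IC:
  fixes C :: "nat \<Rightarrow> nat \<Rightarrow> 'a::field"
  assumes "2 * r \<le> n"
  shows "sdim (ssum (unit_span {r..<2*r}) (rowspace_IC r n C)) = 2 * r"
proof -
  define w where "w i = (if i < r then IC_row r n C i else unit_vec i)" for i
  have "w ` {..<2*r} = unit_vec ` {r..<2*r} \<union> IC_row r n C ` {..<r}"
    by (force simp: w_def)
  moreover have "sdim (vs.span (w ` {..<2*r})) = 2 * r"
    using assms by (subst sdim_span_echelon) (auto simp: w_def IC_row_def unit_vec_def)
  ultimately show ?thesis by (simp add: unit_span_def rowspace_IC_def ssum_span)
qed

lemma injdist_unit_block_rowspace_IC: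
  "2 * r \<le> n \<Longrightarrow> injdist (unit_span {r..<2*r}) (rowspace_IC r n (C :: nat \<Rightarrow> nat \<Rightarrow> 'a::field)) = r"
  by (simp add: injdist_def sdim_ssum_unit_block_rowspace_IC sdim_unit_span sdim_rowspace_IC)

lemma injdist_Grass_rowspace_IC_le:
  assumes "r \<le> n" "U \<in> Grass r n"
  shows "injdist U (rowspace_IC r n C) \<le> r"
  using injdist_le_max[of U n "rowspace_IC r n C"] rowspace_IC_Grass[OF assms(1), of C] assms(2)
  by (simp add: Grass_def sdim_rowspace_IC)

theorem lemma9:
  fixes \<C> :: "(nat \<Rightarrow> nat \<Rightarrow> 'a::{finite,field}) set"
    and n r :: nat
  assumes "1 \<le> r" and "r \<le> n div 2"
    and "\<C> \<subseteq> Mats r (n - r)" and "\<C> \<noteq> {}"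
  shows "(MAX U \<in> (Grass r n :: (nat \<Rightarrow> 'a) set set).
            MIN C \<in> \<C>. injdist U (rowspace_IC r n C)) = r"
proof -
  have two_r_le_n: "2 * r \<le> n" and r_le_n: "r \<le> n" using assms(2) by linarith+
  define radius where "radius U = (MIN C \<in> \<C>. injdist U (rowspace_IC r n C))" for U
  have bounded: "radius U \<le> r" if "U \<in> Grass r n" for U
  proof -
    have "finite ((\<lambda>C. injdist U (rowspace_IC r n C)) ` \<C>)"
      by (rule finite_subset[of _ "{..r}"]) (auto intro: injdist_Grass_rowspace_IC_le[OF r_le_n that])
    then show ?thesis unfolding radius_def using assms(4)
      by (auto simp: Min_le_iff intro: injdist_Grass_rowspace_IC_le[OF r_le_n that])
  qed
  have attained: "radius (unit_span {r..<2*r}) = r"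
    using assms(4) by (simp add: radius_def injdist_unit_block_rowspace_IC[OF two_r_le_n] image_constant_conv)
  have "Max (radius ` Grass r n) = r"
  proof (rule Max_eqI)
    show "finite (radius ` Grass r n)"
      by (rule finite_subset[of _ "{..r}"]) (auto intro: bounded)
    show "y \<le> r" if "y \<in> radius ` Grass r n" for y
      using that bounded by blast
    show "r \<in> radius ` Grass r n"
      using attained unit_block_Grass[OF two_r_le_n] by (metis image_eqI)
  qed
  then show ?thesis unfolding radius_def .
qed

end
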